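(* Let $\Omega\subset\mathbb{R}^n$ be a domain with $\mathrm{width}(\Omega)<+\infty$, let $f\in L^\infty(\Omega)$ and $g\in C(\partial\Omega)\cap L^\infty(\partial\Omega)$, and let $(\varepsilon_i)_{i\ge1}$ be a sequence of positive numbers with $\varepsilon_i\to 0$. For each $i$ let $u_i:\overline{\Omega}\to\mathbb{R}$ be a bounded solution of \[ \begin{cases}\Delta_\infty^{\varepsilon_i}u_i(x)=\varepsilon_i^2 f(x), & x\in\Omega,\\ u_i(x)=g(x), & x\in\partial\Omega.\end{cases} \] Then there exists a subsequence of $(u_i)$ converging locally uniformly to some $u\in C(\overline{\Omega})$.
   Context: A domain is an open connected subset of $\mathbb{R}^n$; $\overline\Omega$ is its closure and $\partial\Omega$ its boundary. $d(x,y)$ denotes the intrinsic metric of $\overline\Omega$: the infimum of the lengths of paths in $\overline\Omega$ from $x$ to $y$. $\mathrm{width}(\Omega)=\sup_{x\in\Omega} d(\partial\Omega,x)$, where $d(\partial\Omega,x)=\inf_{y\in\partial\Omega}d(y,x)$. For $\varepsilon>0$, $B_x(\varepsilon)=\{y\in\overline\Omega: d(x,y)<\varepsilon\}$ and for $w:\overline\Omega\to\mathbb{R}$, $\Delta^{\varepsilon}_\infty w(x)=\inf_{y\in B_x(\varepsilon)}w(y)+\sup_{y\in B_x(\varepsilon)}w(y)-2w(x)$. *)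

theory Defs
  imports "HOL-Analysis.Analysis"
begin

definition path_len :: "(real \<Rightarrow> 'a::metric_space) \<Rightarrow> ereal" where
  "path_len \<gamma> = (SUP p \<in> {(m::nat, t::nat \<Rightarrow> real). t 0 = 0 \<and> t m = 1 \<and>
        (\<forall>i<m. t i \<le> t (Suc i))}.
      ereal (\<Sum>i<fst p. dist (\<gamma> (snd p (Suc i))) (\<gamma> (snd p i))))"

text \<open>Intrinsic metric of the closure of \<Omega> (value \<infinity> if no rectifiable path exists).\<close>
definition intr_dist :: "'a::real_normed_vector set \<Rightarrow> 'a \<Rightarrow> 'a \<Rightarrow> ereal" where
  "intr_dist \<Omega> x y = (INF \<gamma> \<in> {\<gamma>. path \<gamma> \<and> path_image \<gamma> \<subseteq> closure \<Omega> \<and>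
        pathstart \<gamma> = x \<and> pathfinish \<gamma> = y}. path_len \<gamma>)"

definition width :: "'a::real_normed_vector set \<Rightarrow> ereal" where
  "width \<Omega> = (SUP x \<in> \<Omega>. INF y \<in> frontier \<Omega>. intr_dist \<Omega> y x)"

definition intr_ball :: "'a::real_normed_vector set \<Rightarrow> 'a \<Rightarrow> real \<Rightarrow> 'a set" where
  "intr_ball \<Omega> x \<epsilon> = {y \<in> closure \<Omega>. intr_dist \<Omega> x y < ereal \<epsilon>}"

definition eps_inf_lap :: "'a::real_normed_vector set \<Rightarrow> real \<Rightarrow> ('a \<Rightarrow> real) \<Rightarrow> 'a \<Rightarrow> real" where
  "eps_inf_lap \<Omega> \<epsilon> w x =
     (INF y \<in> intr_ball \<Omega> x \<epsilon>. w y) + (SUP y \<in> intr_ball \<Omega> x \<epsilon>. w y) - 2 * w x"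

end

theory Submission
  imports Defs "HOL-Complex_Analysis.Great_Picard"
begin

text \<open>Solutions \<open>u\<close> of the \<open>\<epsilon>\<close>-problem with \<open>\<bar>f\<bar> \<le> F\<close> make both \<open>u\<close> and \<open>-u\<close>
  \<open>\<epsilon>\<close>-subsolutions: \<open>2 v x \<le> inf v + sup v + \<epsilon>\<^sup>2 F\<close> over intrinsic \<open>\<epsilon>\<close>-balls. Of the intrinsic
  metric only two facts matter: it dominates the Euclidean distance, and it equals it along
  segments in the closure, so intrinsic balls contain the Euclidean balls lying in \<open>\<Omega>\<close>.
  An \<open>\<epsilon>\<close>-subsolution is dominated, up to an error \<open>O(\<epsilon>)\<close>, by barriers \<open>A + \<lambda> (2 K s - s\<^sup>2)\<close>
  in the distance \<open>s\<close> to a closed set on which it is already controlled. With the boundary as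
  that set and \<open>K\<close> of the order of the width, this bounds all \<open>u i\<close> uniformly. With a single
  point \<open>c\<close> as that set it gives cone estimates \<open>\<bar>u i z - a\<bar> \<le> \<delta> + L dist z c + C \<epsilon> i\<close>, both at
  interior points and, thanks to the continuity of \<open>g\<close>, at boundary points. So the \<open>u i\<close> are
  equicontinuous up to an error vanishing with \<open>\<epsilon> i\<close>, and a diagonal subsequence converging on a
  countable dense set converges locally uniformly to a continuous limit.\<close>

section \<open>Intrinsic balls\<close>

lemma path_len_ge_dist: "ereal (dist (\<gamma> 0) (\<gamma> 1)) \<le> path_len \<gamma>"
proof -
  let ?t = "\<lambda>i::nat. if i = 0 then 0 else 1 :: real"
  have "ereal (\<Sum>i<1. dist (\<gamma> (?t (Suc i))) (\<gamma> (?t i))) \<le> path_len \<gamma>"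
    unfolding path_len_def by (rule SUP_upper2[of "(1, ?t)"]) auto
  then show ?thesis by (simp add: dist_commute)
qed

lemma dist_le_intr_dist: "ereal (dist x y) \<le> intr_dist \<Omega> x y"
  unfolding intr_dist_def
proof (rule INF_greatest)
  fix \<gamma> assume "\<gamma> \<in> {\<gamma>. path \<gamma> \<and> path_image \<gamma> \<subseteq> closure \<Omega> \<and> pathstart \<gamma> = x \<and> pathfinish \<gamma> = y}"
  then show "ereal (dist x y) \<le> path_len \<gamma>"
    using path_len_ge_dist[of \<gamma>] by (auto simp: pathstart_def pathfinish_def)
qed

lemma path_len_linepath: "path_len (linepath a b) = ereal (dist a b)"
proof (rule antisym)
  show "path_len (linepath a b) \<le> ereal (dist a b)"
    unfolding path_len_def
  proof (rule SUP_least, clarify)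
    fix m and t :: "nat \<Rightarrow> real"
    assume t: "t 0 = 0" "t m = 1" "\<forall>i<m. t i \<le> t (Suc i)"
    have "dist (linepath a b (t (Suc i))) (linepath a b (t i)) = (t (Suc i) - t i) * dist a b"
      if "i < m" for i
    proof -
      have "linepath a b (t (Suc i)) - linepath a b (t i) = (t (Suc i) - t i) *\<^sub>R (b - a)"
        by (simp add: linepath_def algebra_simps)
      then show ?thesis
        using t(3) that by (simp add: dist_norm norm_minus_commute)
    qed
    then have "(\<Sum>i<m. dist (linepath a b (t (Suc i))) (linepath a b (t i)))
        = (\<Sum>i<m. t (Suc i) - t i) * dist a b"
      by (simp add: sum_distrib_right)
    also have "\<dots> = dist a b"
      using t by (simp add: sum_lessThan_telescope)
    finally show "ereal (\<Sum>i<fst (m, t). dist (linepath a b (snd (m, t) (Suc i))) (linepath a b (snd (m, t) i)))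
        \<le> ereal (dist a b)" by simp
  qed
  show "ereal (dist a b) \<le> path_len (linepath a b)"
    using path_len_ge_dist[of "linepath a b"] by (simp add: linepath_def)
qed

lemma intr_dist_le_dist:
  assumes "closed_segment a b \<subseteq> closure \<Omega>"
  shows "intr_dist \<Omega> a b \<le> ereal (dist a b)"
proof -
  have "intr_dist \<Omega> a b \<le> path_len (linepath a b)"
    unfolding intr_dist_def using assms by (intro INF_lower) auto
  then show ?thesis by (simp add: path_len_linepath)
qed

lemma intr_ball_subset: "intr_ball \<Omega> x e \<subseteq> closure \<Omega> \<inter> ball x e"
proof
  fix y assume y: "y \<in> intr_ball \<Omega> x e"
  then have "intr_dist \<Omega> x y < ereal e"
    by (simp add: intr_ball_def)
  then have "ereal (dist x y) < ereal e"
    by (rule le_less_trans[OF dist_le_intr_dist])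
  with y show "y \<in> closure \<Omega> \<inter> ball x e"
    by (simp add: intr_ball_def)
qed

lemma mem_intr_ball_if_segment:
  assumes "closed_segment x y \<subseteq> closure \<Omega>" "dist x y < e"
  shows "y \<in> intr_ball \<Omega> x e"
  using assms le_less_trans[OF intr_dist_le_dist[OF assms(1)]] by (auto simp: intr_ball_def)

lemma centre_in_intr_ball: "x \<in> \<Omega> \<Longrightarrow> 0 < e \<Longrightarrow> x \<in> intr_ball \<Omega> x e"
  using closure_subset by (intro mem_intr_ball_if_segment) auto

lemma ball_subset_intr_ball:
  assumes "ball x e \<subseteq> \<Omega>"
  shows "ball x e \<subseteq> intr_ball \<Omega> x e"
proof
  fix y assume y: "y \<in> ball x e"
  then have "closed_segment x y \<subseteq> ball x e"
    by (intro closed_segment_subset) (auto intro: le_less_trans[OF zero_le_dist])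
  with assms y show "y \<in> intr_ball \<Omega> x e"
    using closure_subset by (intro mem_intr_ball_if_segment) auto
qed

lemma ball_subset_if_frontier_disjoint:
  fixes \<Omega> :: "'a::real_normed_vector set"
  assumes "y \<in> \<Omega>" "ball y r \<inter> frontier \<Omega> = {}"
  shows "ball y r \<subseteq> \<Omega>"
proof (rule ccontr)
  assume "\<not> ball y r \<subseteq> \<Omega>"
  then obtain x where "x \<in> ball y r" "x \<notin> \<Omega>"
    by blast
  then have "0 < r" "ball y r - \<Omega> \<noteq> {}"
    by (auto intro: le_less_trans[OF zero_le_dist])
  moreover have "ball y r \<inter> \<Omega> \<noteq> {}"
    using assms(1) \<open>0 < r\<close> by (metis IntI centre_in_ball empty_iff)
  ultimately show False
    using connected_Int_frontier[OF connected_ball] assms(2) by blast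
qed

lemma frontier_meets_intr_ball:
  fixes \<Omega> :: "'a::euclidean_space set"
  assumes "open \<Omega>" "y \<in> \<Omega>" "\<not> ball y e \<subseteq> \<Omega>"
  obtains q where "q \<in> frontier \<Omega>" "q \<in> intr_ball \<Omega> y e"
proof -
  have "ball y e \<inter> frontier \<Omega> \<noteq> {}"
    using ball_subset_if_frontier_disjoint[OF assms(2)] assms(3) by blast
  then obtain q' where q': "q' \<in> frontier \<Omega>" "dist y q' < e"
    by auto
  then obtain q where q: "q \<in> frontier \<Omega>" "infdist y (frontier \<Omega>) = dist y q"
    using infdist_attains_inf[OF frontier_closed] by blast
  have "dist y q < e"
    using q q' infdist_le[OF q'(1), of y] by linarith
  have "q \<notin> \<Omega>"
    using q(1) assms(1) by (simp add: frontier_def interior_open)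
  then have "0 < dist y q"
    using assms(2) by auto
  have "ball y (dist y q) \<subseteq> \<Omega>"
    using q infdist_le[of _ "frontier \<Omega>" y]
    by (intro ball_subset_if_frontier_disjoint[OF assms(2)]) (force simp: mem_ball)
  then have "closure (ball y (dist y q)) \<subseteq> closure \<Omega>"
    by (rule closure_mono)
  moreover have "closed_segment y q \<subseteq> cball y (dist y q)"
    by (intro closed_segment_subset) auto
  ultimately have "closed_segment y q \<subseteq> closure \<Omega>"
    using closure_ball[OF \<open>0 < dist y q\<close>] by blast
  with \<open>dist y q < e\<close> q(1) show ?thesis
    by (intro that mem_intr_ball_if_segment)
qed

lemma exists_step_towards:
  fixes y q :: "'a::real_normed_vector"
  assumes "0 < e" "0 < \<eta>" "e \<le> dist y q"
  obtains y' where "y' \<in> ball y e" "dist y' q \<le> dist y q - e + \<eta>"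
proof -
  define s where "s = dist y q"
  define \<rho> where "\<rho> = e - min \<eta> e / 2"
  have s: "e \<le> s" "0 < s" and \<rho>: "0 < \<rho>" "\<rho> < e" "e - \<eta> \<le> \<rho>"
    using assms by (auto simp: s_def \<rho>_def)
  define y' where "y' = y + (\<rho> / s) *\<^sub>R (q - y)"
  have n: "norm (q - y) = s"
    by (simp add: s_def dist_norm norm_minus_commute)
  have "dist y y' = \<rho>"
    using s \<rho> by (simp add: y'_def dist_norm n)
  have "q - y' = (1 - \<rho> / s) *\<^sub>R (q - y)"
    by (simp add: y'_def algebra_simps)
  then have "dist y' q = \<bar>1 - \<rho> / s\<bar> * s"
    by (simp add: dist_norm norm_minus_commute[of y' q] n)
  also have "\<dots> = s - \<rho>"
    using s \<rho> by (simp add: field_simps)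
  finally show ?thesis
    using \<rho> \<open>dist y y' = \<rho>\<close> by (intro that[of y']) (auto simp: s_def)
qed

lemma intr_ball_meets_or_approaches:
  fixes \<Omega> T :: "'a::euclidean_space set"
  assumes "open \<Omega>" "y \<in> \<Omega>" "closed T" "T \<noteq> {}" "0 < e" "0 < \<eta>"
  shows "(\<exists>w\<in>intr_ball \<Omega> y e. w \<in> frontier \<Omega> \<union> T)
    \<or> (\<exists>y'\<in>intr_ball \<Omega> y e. infdist y' T \<le> infdist y T - e + \<eta>)"
proof (cases "ball y e \<subseteq> \<Omega>")
  case True
  obtain q where q: "q \<in> T" "infdist y T = dist y q"
    using infdist_attains_inf[OF assms(3,4)] by blast
  show ?thesis
  proof (cases "dist y q < e")
    case True
    then show ?thesis
      using q(1) ball_subset_intr_ball[OF \<open>ball y e \<subseteq> \<Omega>\<close>] by auto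
  next
    case False
    then obtain y' where "y' \<in> ball y e" "dist y' q \<le> dist y q - e + \<eta>"
      using exists_step_towards[OF assms(5,6)] by (metis not_less)
    then show ?thesis
      using ball_subset_intr_ball[OF True] infdist_le[OF q(1), of y'] q(2) by force
  qed
next
  case False
  then show ?thesis
    using frontier_meets_intr_ball[OF assms(1,2)] by blast
qed

section \<open>Subsolutions of the dynamic programming principle\<close>

text \<open>The supremum over the intrinsic ball is replaced by an arbitrary upper bound \<open>P\<close>, and the
  infimum by the value at an arbitrary point \<open>w\<close>, so that no boundedness of \<open>v\<close> is needed.\<close>
definition eps_subsolution :: "'a::real_normed_vector set \<Rightarrow> real \<Rightarrow> real \<Rightarrow> ('a \<Rightarrow> real) \<Rightarrow> bool" where
  "eps_subsolution \<Omega> e F v \<longleftrightarrow>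
     (\<forall>x\<in>\<Omega>. \<forall>w\<in>intr_ball \<Omega> x e. \<forall>P. (\<forall>z\<in>intr_ball \<Omega> x e. v z \<le> P) \<longrightarrow> 2 * v x \<le> v w + P + e\<^sup>2 * F)"

lemma eps_inf_lap_abs_le:
  fixes \<Omega> :: "'a::real_normed_vector set"
  assumes "x \<in> \<Omega>" "0 < e" and v: "\<And>z. z \<in> closure \<Omega> \<Longrightarrow> \<bar>v z\<bar> \<le> S"
  shows "\<bar>eps_inf_lap \<Omega> e v x\<bar> \<le> 4 * S"
proof -
  let ?B = "intr_ball \<Omega> x e"
  have x: "x \<in> ?B"
    using centre_in_intr_ball[OF assms(1,2)] .
  have vB: "- S \<le> v z" "v z \<le> S" if "z \<in> ?B" for z
  proof -
    have "z \<in> closure \<Omega>"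
      using intr_ball_subset that by blast
    then show "- S \<le> v z" "v z \<le> S"
      using v[of z] by (simp_all add: abs_le_iff)
  qed
  have ne: "?B \<noteq> {}"
    using x by blast
  have "bdd_below (v ` ?B)"
    by (rule bdd_belowI2[where m = "- S"]) (rule vB)
  then have "(INF y\<in>?B. v y) \<le> S"
    using cINF_lower[OF _ x] vB(2)[OF x] by fastforce
  have "bdd_above (v ` ?B)"
    by (rule bdd_aboveI2[where M = S]) (rule vB)
  then have "- S \<le> (SUP y\<in>?B. v y)"
    using cSUP_upper[OF x] vB(1)[OF x] by fastforce
  moreover have "- S \<le> (INF y\<in>?B. v y)" "(SUP y\<in>?B. v y) \<le> S"
    using vB by (auto intro!: cINF_greatest[OF ne] cSUP_least[OF ne])
  ultimately show ?thesis
    using vB[OF x] \<open>(INF y\<in>?B. v y) \<le> S\<close> by (simp add: eps_inf_lap_def abs_le_iff)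
qed

lemma eps_inf_lap_rhs_bounded:
  fixes \<Omega> :: "'a::real_normed_vector set"
  assumes "0 < e" "bounded (u ` closure \<Omega>)"
    and "\<And>x. x \<in> \<Omega> \<Longrightarrow> eps_inf_lap \<Omega> e u x = e\<^sup>2 * f x"
  obtains F where "0 \<le> F" "\<And>x. x \<in> \<Omega> \<Longrightarrow> \<bar>f x\<bar> \<le> F"
proof -
  obtain S0 where "\<And>z. z \<in> closure \<Omega> \<Longrightarrow> \<bar>u z\<bar> \<le> S0"
    using assms(2) by (auto simp: bounded_real)
  then obtain S where S: "\<And>z. z \<in> closure \<Omega> \<Longrightarrow> \<bar>u z\<bar> \<le> S" "0 \<le> S"
    by (metis max.cobounded1 max.cobounded2 order_trans)
  have "e\<^sup>2 * \<bar>f x\<bar> \<le> 4 * S" if "x \<in> \<Omega>" for x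
    using eps_inf_lap_abs_le[where v = u, OF that assms(1) S(1)] assms(3)[OF that] by (simp add: abs_mult)
  then show ?thesis
    using S(2) assms(1) by (intro that[of "4 * S / e\<^sup>2"]) (simp_all add: field_simps)
qed

lemma eps_inf_lap_solution_is_subsolution:
  fixes \<Omega> :: "'a::real_normed_vector set"
  assumes "bounded (u ` closure \<Omega>)"
    and "\<And>x. x \<in> \<Omega> \<Longrightarrow> eps_inf_lap \<Omega> e u x = e\<^sup>2 * f x"
    and "\<And>x. x \<in> \<Omega> \<Longrightarrow> \<bar>f x\<bar> \<le> F"
  shows "eps_subsolution \<Omega> e F u" "eps_subsolution \<Omega> e F (\<lambda>z. - u z)"
proof -
  have key: "(INF z\<in>intr_ball \<Omega> x e. u z) \<le> u w" "u w \<le> (SUP z\<in>intr_ball \<Omega> x e. u z)"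
    "2 * u x = (INF z\<in>intr_ball \<Omega> x e. u z) + (SUP z\<in>intr_ball \<Omega> x e. u z) - e\<^sup>2 * f x"
    "- (e\<^sup>2 * F) \<le> e\<^sup>2 * f x" "e\<^sup>2 * f x \<le> e\<^sup>2 * F"
    if "x \<in> \<Omega>" "w \<in> intr_ball \<Omega> x e" for x w
  proof -
    let ?B = "intr_ball \<Omega> x e"
    have "u ` ?B \<subseteq> u ` closure \<Omega>"
      using intr_ball_subset by blast
    then have "bounded (u ` ?B)"
      using assms(1) by (rule bounded_subset[rotated])
    then show "(INF z\<in>?B. u z) \<le> u w" "u w \<le> (SUP z\<in>?B. u z)"
      using cINF_lower[OF bounded_imp_bdd_below \<open>w \<in> ?B\<close>] cSUP_upper[OF \<open>w \<in> ?B\<close> bounded_imp_bdd_above]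
      by auto
    show "2 * u x = (INF z\<in>?B. u z) + (SUP z\<in>?B. u z) - e\<^sup>2 * f x"
      using assms(2)[OF \<open>x \<in> \<Omega>\<close>] by (simp add: eps_inf_lap_def)
    have "\<bar>e\<^sup>2 * f x\<bar> \<le> e\<^sup>2 * F"
      using assms(3)[OF \<open>x \<in> \<Omega>\<close>] by (simp add: abs_mult mult_left_mono)
    then show "- (e\<^sup>2 * F) \<le> e\<^sup>2 * f x" "e\<^sup>2 * f x \<le> e\<^sup>2 * F"
      by (simp_all add: abs_le_iff)
  qed
  show "eps_subsolution \<Omega> e F u"
    unfolding eps_subsolution_def
  proof (intro ballI allI impI)
    fix x w P assume "x \<in> \<Omega>" and w: "w \<in> intr_ball \<Omega> x e" and "\<forall>z\<in>intr_ball \<Omega> x e. u z \<le> P"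
    then have "(SUP z\<in>intr_ball \<Omega> x e. u z) \<le> P"
      by (intro cSUP_least) auto
    with key[OF \<open>x \<in> \<Omega>\<close> w] show "2 * u x \<le> u w + P + e\<^sup>2 * F"
      by linarith
  qed
  show "eps_subsolution \<Omega> e F (\<lambda>z. - u z)"
    unfolding eps_subsolution_def
  proof (intro ballI allI impI)
    fix x w P assume "x \<in> \<Omega>" and w: "w \<in> intr_ball \<Omega> x e" and "\<forall>z\<in>intr_ball \<Omega> x e. - u z \<le> P"
    then have "- P \<le> (INF z\<in>intr_ball \<Omega> x e. u z)"
      by (intro cINF_greatest) auto
    with key[OF \<open>x \<in> \<Omega>\<close> w] show "2 * - u x \<le> - u w + P + e\<^sup>2 * F"
      by linarith
  qed
qed

section \<open>Barrier comparison\<close>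

definition capped_parabola :: "real \<Rightarrow> real \<Rightarrow> real \<Rightarrow> real" where
  "capped_parabola lam K s = lam * (K\<^sup>2 - (K - min s K)\<^sup>2)"

lemma capped_parabola_nonneg: "0 \<le> lam \<Longrightarrow> 0 \<le> K \<Longrightarrow> 0 \<le> s \<Longrightarrow> 0 \<le> capped_parabola lam K s"
  unfolding capped_parabola_def by (auto intro!: mult_nonneg_nonneg power_mono)

lemma capped_parabola_zero: "0 \<le> K \<Longrightarrow> capped_parabola lam K 0 = 0"
  by (simp add: capped_parabola_def)

lemma capped_parabola_mono: "0 \<le> lam \<Longrightarrow> s \<le> t \<Longrightarrow> capped_parabola lam K s \<le> capped_parabola lam K t"
  unfolding capped_parabola_def by (auto intro!: mult_left_mono power_mono)

lemma capped_parabola_le_max: "0 \<le> lam \<Longrightarrow> capped_parabola lam K s \<le> lam * K\<^sup>2"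
  unfolding capped_parabola_def by (auto intro!: mult_left_mono)

lemma capped_parabola_increment_le:
  assumes "0 \<le> lam" "0 \<le> K" "0 \<le> s" "0 \<le> d"
  shows "capped_parabola lam K (s + d) - capped_parabola lam K s \<le> 2 * lam * K * d"
proof -
  define a b where "a = min s K" and "b = min (s + d) K"
  have "capped_parabola lam K (s + d) - capped_parabola lam K s = lam * ((b - a) * (2 * K - a - b))"
    unfolding capped_parabola_def a_def b_def by (simp add: power2_eq_square algebra_simps)
  also have "\<dots> \<le> lam * (d * (2 * K))"
  proof (rule mult_left_mono[OF mult_mono])
    show "b - a \<le> d" "2 * K - a - b \<le> 2 * K" "0 \<le> 2 * K - a - b"
      using assms by (auto simp: a_def b_def)
  qed (use assms in auto)
  finally show ?thesis by (simp add: algebra_simps)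
qed

lemma capped_parabola_le_linear:
  "0 \<le> lam \<Longrightarrow> 0 \<le> K \<Longrightarrow> 0 \<le> s \<Longrightarrow> capped_parabola lam K s \<le> 2 * lam * K * s"
  using capped_parabola_increment_le[of lam K 0 s] by (simp add: capped_parabola_zero)

lemma capped_parabola_ge_linear:
  assumes "0 \<le> lam" "0 \<le> K" "0 \<le> s"
  shows "lam * K * min s K \<le> capped_parabola lam K s"
proof -
  define a where "a = min s K"
  have "0 \<le> a * (K - a)"
    using assms by (simp add: a_def)
  then have "K * a \<le> a * (2 * K - a)"
    by (simp add: algebra_simps)
  also have "\<dots> = K\<^sup>2 - (K - a)\<^sup>2"
    by (simp add: power2_eq_square algebra_simps)
  finally show ?thesis
    using assms(1) by (simp add: capped_parabola_def a_def[symmetric] mult.assoc mult_left_mono)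
qed

text \<open>\<open>\<rho>\<close> is the step towards a closed set that an intrinsic \<open>e\<close>-ball guarantees: a full step \<open>e\<close>
  up to the slack \<open>e\<^sup>2 / (4 * K)\<close>, which is small enough to keep a concavity gap of order \<open>e\<^sup>2\<close>.\<close>
lemma capped_parabola_concavity_gap:
  assumes "0 \<le> lam" "1 \<le> K" "0 < e" "e \<le> 1"
    and \<rho>: "\<rho> = e - e\<^sup>2 / (4 * K)" and a: "0 \<le> a - \<rho>" "a + e \<le> K"
  shows "lam * e\<^sup>2 / 2 \<le> 2 * capped_parabola lam K a - capped_parabola lam K (a - \<rho>)
                          - capped_parabola lam K (a + e)"
proof -
  have "e\<^sup>2 \<le> e * K"
    using assms(2-4) by (simp add: power2_eq_square mult_left_mono)
  also have "\<dots> \<le> e * (4 * K)"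
    using assms(2,3) by simp
  finally have "0 \<le> \<rho>"
    using assms(2) by (simp add: \<rho> divide_le_eq mult.commute)
  have "\<rho> \<le> e" "2 * K * (e - \<rho>) = e\<^sup>2 / 2"
    using assms(2) by (simp_all add: \<rho>)
  have parabola: "capped_parabola lam K s = lam * (2 * K * s - s\<^sup>2)" if "0 \<le> s" "s \<le> K" for s
    using that by (simp add: capped_parabola_def power2_eq_square algebra_simps)
  have "2 * capped_parabola lam K a - capped_parabola lam K (a - \<rho>) - capped_parabola lam K (a + e)
      = lam * (e\<^sup>2 + \<rho>\<^sup>2 - 2 * (K - a) * (e - \<rho>))"
    using a \<open>0 \<le> \<rho>\<close> \<open>\<rho> \<le> e\<close> assms(3)
    by (simp add: parabola[of a] parabola[of "a - \<rho>"] parabola[of "a + e"] power2_eq_square algebra_simps)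
  moreover have "2 * (K - a) * (e - \<rho>) \<le> 2 * K * (e - \<rho>)"
    using a \<open>0 \<le> \<rho>\<close> \<open>\<rho> \<le> e\<close> by (simp add: mult_right_mono)
  then have "e\<^sup>2 / 2 \<le> e\<^sup>2 + \<rho>\<^sup>2 - 2 * (K - a) * (e - \<rho>)"
    using \<open>2 * K * (e - \<rho>) = e\<^sup>2 / 2\<close> zero_le_power2[of \<rho>] by linarith
  then have "lam * (e\<^sup>2 / 2) \<le> lam * (e\<^sup>2 + \<rho>\<^sup>2 - 2 * (K - a) * (e - \<rho>))"
    using assms(1) by (rule mult_left_mono)
  ultimately show ?thesis
    by simp
qed

lemma eps_subsolution_capped_parabola_step:
  fixes \<Omega> :: "'a::real_normed_vector set" and h v :: "'a \<Rightarrow> real" and lam K :: real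
  defines "\<psi> \<equiv> capped_parabola lam K"
  assumes e: "0 < e" "e \<le> 1" and F: "0 \<le> F" "2 * F + 2 \<le> lam" and K: "1 \<le> K"
    and sub: "eps_subsolution \<Omega> e F v" and y: "y \<in> \<Omega>"
    and h_nonneg: "\<And>z. z \<in> closure \<Omega> \<Longrightarrow> 0 \<le> h z"
    and h_ball: "\<And>z. z \<in> intr_ball \<Omega> y e \<Longrightarrow> h z \<le> h y + e" and "h y + e \<le> K"
    and below: "\<And>z. z \<in> closure \<Omega> \<Longrightarrow> v z \<le> A + \<psi> (h z) + m"
    and alt: "(\<exists>w\<in>intr_ball \<Omega> y e. v w \<le> A + \<psi> (h w))
      \<or> (\<exists>y'\<in>intr_ball \<Omega> y e. h y' \<le> h y - (e - e\<^sup>2 / (4 * K)))"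
  shows "v y - (A + \<psi> (h y)) \<le> max ((m + 4 * lam * K * e + F * e\<^sup>2) / 2) (m - e\<^sup>2 / 2)"
proof -
  let ?B = "intr_ball \<Omega> y e"
  have lam: "0 \<le> lam"
    using F by linarith
  have B_closure: "z \<in> closure \<Omega>" if "z \<in> ?B" for z
    using intr_ball_subset that by blast
  have "v z \<le> A + \<psi> (h y + e) + m" if "z \<in> ?B" for z
    using below[OF B_closure[OF that]] capped_parabola_mono[OF lam h_ball[OF that], of K]
    by (simp add: \<psi>_def)
  then have mean: "2 * v y \<le> v w + (A + \<psi> (h y + e) + m) + e\<^sup>2 * F" if "w \<in> ?B" for w
    using sub y that unfolding eps_subsolution_def by blast
  from alt show ?thesis
  proof (elim disjE bexE)
    fix w assume "w \<in> ?B" "v w \<le> A + \<psi> (h w)"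
    then have "v w \<le> A + \<psi> (h y + e)"
      using capped_parabola_mono[OF lam h_ball[OF \<open>w \<in> ?B\<close>], of K] unfolding \<psi>_def by linarith
    moreover have "\<psi> (h y + e) - \<psi> (h y) \<le> 2 * lam * K * e"
      unfolding \<psi>_def using K e h_nonneg[of y] y closure_subset
      by (intro capped_parabola_increment_le[OF lam]) auto
    ultimately have "v y - (A + \<psi> (h y)) \<le> (m + 4 * lam * K * e + F * e\<^sup>2) / 2"
      using mean[OF \<open>w \<in> ?B\<close>] by (simp add: algebra_simps)
    then show ?thesis
      by (rule max.coboundedI1)
  next
    fix y' assume "y' \<in> ?B" "h y' \<le> h y - (e - e\<^sup>2 / (4 * K))"
    then have "v y' \<le> A + \<psi> (h y - (e - e\<^sup>2 / (4 * K))) + m"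
      using below[OF B_closure[OF \<open>y' \<in> ?B\<close>]] capped_parabola_mono[OF lam \<open>h y' \<le> _\<close>, of K]
      unfolding \<psi>_def by linarith
    moreover have "lam * e\<^sup>2 / 2 \<le> 2 * \<psi> (h y) - \<psi> (h y - (e - e\<^sup>2 / (4 * K))) - \<psi> (h y + e)"
      unfolding \<psi>_def using h_nonneg[OF B_closure[OF \<open>y' \<in> ?B\<close>]] \<open>h y' \<le> _\<close> \<open>h y + e \<le> K\<close>
      by (intro capped_parabola_concavity_gap[OF lam K e refl]) auto
    moreover have "(F + 1) * e\<^sup>2 \<le> lam * e\<^sup>2 / 2"
      using mult_right_mono[OF F(2) zero_le_power2[of e]] by (simp add: algebra_simps)
    ultimately have "v y - (A + \<psi> (h y)) \<le> m - e\<^sup>2 / 2"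
      using mean[OF \<open>y' \<in> ?B\<close>] by (simp add: algebra_simps)
    then show ?thesis
      by (rule max.coboundedI2)
  qed
qed

lemma eps_subsolution_infdist_step:
  fixes \<Omega> T :: "'a::euclidean_space set" and v :: "'a \<Rightarrow> real" and lam K :: real
  defines "\<psi> \<equiv> capped_parabola lam K"
  assumes \<Omega>: "open \<Omega>" and e: "0 < e" "e \<le> 1" and F: "0 \<le> F" "2 * F + 2 \<le> lam" and K: "1 \<le> K"
    and sub: "eps_subsolution \<Omega> e F v" and T: "closed T" "T \<noteq> {}"
    and bdry: "\<And>w. w \<in> closure \<Omega> \<Longrightarrow> w \<in> frontier \<Omega> \<union> T \<Longrightarrow> v w \<le> A + \<psi> (infdist w T)"
    and below: "\<And>z. z \<in> closure \<Omega> \<Longrightarrow> v z \<le> A + \<psi> (infdist z T) + m"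
    and y: "y \<in> \<Omega>" "infdist y T < K - 1"
  shows "v y - (A + \<psi> (infdist y T)) \<le> max ((m + 4 * lam * K * e + F * e\<^sup>2) / 2) (m - e\<^sup>2 / 2)"
proof -
  have "0 < e\<^sup>2 / (4 * K)"
    using e K by simp
  from intr_ball_meets_or_approaches[OF \<Omega> y(1) T e(1) this]
  have alt: "(\<exists>w\<in>intr_ball \<Omega> y e. v w \<le> A + \<psi> (infdist w T))
      \<or> (\<exists>y'\<in>intr_ball \<Omega> y e. infdist y' T \<le> infdist y T - (e - e\<^sup>2 / (4 * K)))"
  proof (elim disjE bexE)
    fix w assume "w \<in> intr_ball \<Omega> y e" "w \<in> frontier \<Omega> \<union> T"
    then show ?thesis
      using bdry intr_ball_subset by blast
  next
    fix y' assume "y' \<in> intr_ball \<Omega> y e" "infdist y' T \<le> infdist y T - e + e\<^sup>2 / (4 * K)"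
    then show ?thesis
      by (intro disjI2 bexI[of _ y']) auto
  qed
  show ?thesis
    unfolding \<psi>_def
  proof (rule eps_subsolution_capped_parabola_step[OF e F K sub y(1) _ _ _ _ alt[unfolded \<psi>_def]])
    show "infdist w T \<le> infdist y T + e" if "w \<in> intr_ball \<Omega> y e" for w
      using that intr_ball_subset infdist_triangle[of w T y] by (fastforce simp: dist_commute)
    show "infdist y T + e \<le> K"
      using y(2) e by linarith
  qed (use below in \<open>auto simp: \<psi>_def infdist_nonneg\<close>)
qed

text \<open>Comparison with the barrier \<open>A + capped_parabola lam K (infdist z T)\<close>: at a point of
  \<open>\<Omega>\<close> off the boundary set where \<open>v\<close> minus the barrier came close to its supremum \<open>m\<close>, the
  subsolution inequality would either see the boundary set or push the barrier's argument down by
  almost \<open>e\<close>; in the second case the concavity gap of the parabola beats the error \<open>e\<^sup>2 * F\<close>.\<close>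
lemma eps_subsolution_le_capped_parabola:
  fixes \<Omega> T :: "'a::euclidean_space set" and v :: "'a \<Rightarrow> real"
  assumes \<Omega>: "open \<Omega>" and e: "0 < e" "e \<le> 1" and F: "0 \<le> F" "2 * F + 2 \<le> lam" and K: "1 \<le> K"
    and sub: "eps_subsolution \<Omega> e F v" and v_bdd: "bounded (v ` closure \<Omega>)"
    and T: "closed T" "T \<noteq> {}"
    and bdry: "\<And>w. w \<in> closure \<Omega> \<Longrightarrow> w \<in> frontier \<Omega> \<union> T \<or> K - 1 \<le> infdist w T \<Longrightarrow>
                 v w \<le> A + capped_parabola lam K (infdist w T)"
    and z: "z \<in> closure \<Omega>"
  shows "v z \<le> A + capped_parabola lam K (infdist z T) + (4 * lam * K * e + F * e\<^sup>2)"
proof -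
  define \<phi> where "\<phi> y = A + capped_parabola lam K (infdist y T)" for y
  define M where "M = 4 * lam * K * e + F * e\<^sup>2"
  obtain S where "\<forall>x\<in>v ` closure \<Omega>. \<bar>x\<bar> \<le> S"
    using v_bdd by (auto simp: bounded_real)
  then have S: "v y \<le> S" if "y \<in> closure \<Omega>" for y
    using that abs_le_D1 by blast
  have \<phi>_ge: "A \<le> \<phi> y" for y
    using capped_parabola_nonneg[of lam K "infdist y T"] F K by (simp add: \<phi>_def infdist_nonneg)
  have bdd: "bdd_above ((\<lambda>y. v y - \<phi> y) ` closure \<Omega>)"
    by (intro bdd_aboveI2[where M = "S - A"]) (simp add: S \<phi>_ge diff_mono)
  define m where "m = (SUP y\<in>closure \<Omega>. v y - \<phi> y)"
  have below: "v y \<le> \<phi> y + m" if "y \<in> closure \<Omega>" for y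
    using cSUP_upper[OF that bdd] unfolding m_def by linarith
  have "v y - \<phi> y \<le> max 0 (max ((m + M) / 2) (m - e\<^sup>2 / 2))" if y: "y \<in> closure \<Omega>" for y
  proof (cases "y \<in> frontier \<Omega> \<union> T \<or> K - 1 \<le> infdist y T")
    case True
    then show ?thesis
      using bdry[OF y] by (simp add: \<phi>_def)
  next
    case False
    then have "y \<in> \<Omega>"
      using y \<Omega> by (simp add: frontier_def interior_open)
    with False have "v y - \<phi> y \<le> max ((m + 4 * lam * K * e + F * e\<^sup>2) / 2) (m - e\<^sup>2 / 2)"
      unfolding \<phi>_def using bdry below
      by (intro eps_subsolution_infdist_step[OF \<Omega> e F K sub T]) (auto simp: \<phi>_def)
    then show ?thesis
      unfolding M_def add.assoc[symmetric] by (rule max.coboundedI2)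
  qed
  then have m_le: "m \<le> max 0 (max ((m + M) / 2) (m - e\<^sup>2 / 2))"
    unfolding m_def using z by (intro cSUP_least) auto
  have "0 \<le> M" "0 < e\<^sup>2"
    using F K e by (simp_all add: M_def)
  have "\<not> M < m"
  proof
    assume "M < m"
    then have "max 0 (max ((m + M) / 2) (m - e\<^sup>2 / 2)) < m"
      using \<open>0 \<le> M\<close> \<open>0 < e\<^sup>2\<close> by simp
    with m_le show False
      by linarith
  qed
  then show ?thesis
    using below[OF z] by (simp add: \<phi>_def M_def)
qed

lemma eps_subsolution_le_frontier_bound:
  fixes \<Omega> :: "'a::euclidean_space set" and v :: "'a \<Rightarrow> real"
  assumes \<Omega>: "open \<Omega>" and e: "0 < e" "e \<le> 1" and F: "0 \<le> F"
    and sub: "eps_subsolution \<Omega> e F v" and v_bdd: "bounded (v ` closure \<Omega>)"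
    and fr: "frontier \<Omega> \<noteq> {}" and W: "0 \<le> W" "\<And>y. y \<in> \<Omega> \<Longrightarrow> infdist y (frontier \<Omega>) \<le> W"
    and G: "\<And>q. q \<in> frontier \<Omega> \<Longrightarrow> v q \<le> G" and z: "z \<in> closure \<Omega>"
  shows "v z \<le> G + (2 * F + 2) * (W + 2)\<^sup>2 + 4 * (2 * F + 2) * (W + 2) + F"
proof -
  define lam K where "lam = 2 * F + 2" and "K = W + 2"
  have "lam \<ge> 0" "K \<ge> 1"
    using F W by (simp_all add: lam_def K_def)
  have "v z \<le> G + capped_parabola lam K (infdist z (frontier \<Omega>)) + (4 * lam * K * e + F * e\<^sup>2)"
  proof (rule eps_subsolution_le_capped_parabola[OF \<Omega> e F _ \<open>K \<ge> 1\<close> sub v_bdd frontier_closed fr _ z])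
    fix w assume w: "w \<in> closure \<Omega>" "w \<in> frontier \<Omega> \<union> frontier \<Omega> \<or> K - 1 \<le> infdist w (frontier \<Omega>)"
    have "w \<in> frontier \<Omega>"
    proof (rule ccontr)
      assume "w \<notin> frontier \<Omega>"
      then have "w \<in> \<Omega>"
        using w(1) \<Omega> by (simp add: frontier_def interior_open)
      then show False
        using w(2) W(2) \<open>w \<notin> frontier \<Omega>\<close> by (force simp: K_def)
    qed
    then show "v w \<le> G + capped_parabola lam K (infdist w (frontier \<Omega>))"
      using G \<open>K \<ge> 1\<close> by (simp add: capped_parabola_zero)
  qed (simp add: lam_def)
  moreover have "capped_parabola lam K (infdist z (frontier \<Omega>)) \<le> lam * K\<^sup>2"
    using \<open>lam \<ge> 0\<close> by (rule capped_parabola_le_max)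
  moreover have "4 * lam * K * e \<le> 4 * lam * K" "F * e\<^sup>2 \<le> F"
    using e F \<open>lam \<ge> 0\<close> \<open>K \<ge> 1\<close> by (simp_all add: mult_left_le power_le_one)
  ultimately show ?thesis
    by (simp add: lam_def K_def)
qed

lemma eps_subsolution_cone_bound:
  fixes \<Omega> :: "'a::euclidean_space set" and v :: "'a \<Rightarrow> real"
  assumes \<Omega>: "open \<Omega>" and e: "0 < e" "e \<le> 1" and F: "0 \<le> F" "2 * F + 2 \<le> lam" and K: "1 \<le> K"
    and sub: "eps_subsolution \<Omega> e F v" and v_bdd: "bounded (v ` closure \<Omega>)"
    and S: "\<And>y. y \<in> closure \<Omega> \<Longrightarrow> v y \<le> S"
    and "0 < \<rho>" and rise: "S - A \<le> lam * K * \<rho>" "S - A \<le> lam * K * (K - 1)"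
    and near: "\<And>w. w \<in> frontier \<Omega> \<union> {c} \<Longrightarrow> dist w c < \<rho> \<Longrightarrow> v w \<le> A"
    and z: "z \<in> closure \<Omega>"
  shows "v z \<le> A + 2 * lam * K * dist z c + (4 * lam * K + F) * e"
proof -
  have "lam \<ge> 0"
    using F by linarith
  have "v z \<le> A + capped_parabola lam K (infdist z {c}) + (4 * lam * K * e + F * e\<^sup>2)"
  proof (rule eps_subsolution_le_capped_parabola[OF \<Omega> e F K sub v_bdd closed_singleton _ _ z])
    fix w assume w: "w \<in> closure \<Omega>" "w \<in> frontier \<Omega> \<union> {c} \<or> K - 1 \<le> infdist w {c}"
    show "v w \<le> A + capped_parabola lam K (infdist w {c})"
    proof (cases "w \<in> frontier \<Omega> \<union> {c} \<and> dist w c < \<rho>")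
      case True
      then show ?thesis
        using near capped_parabola_nonneg[OF \<open>lam \<ge> 0\<close>, of K "dist w c"] K by fastforce
    next
      case False
      then have "\<rho> \<le> dist w c \<or> K - 1 \<le> dist w c"
        using w(2) by auto
      then have "min \<rho> (K - 1) \<le> min (dist w c) K"
        by auto
      have "S - A \<le> lam * K * min \<rho> (K - 1)"
        using rise by (cases "\<rho> \<le> K - 1") (simp_all add: min_def)
      also have "\<dots> \<le> lam * K * min (dist w c) K"
        using \<open>min \<rho> (K - 1) \<le> _\<close> \<open>lam \<ge> 0\<close> K by (simp add: mult_left_mono)
      also have "\<dots> \<le> capped_parabola lam K (dist w c)"
        using K \<open>lam \<ge> 0\<close> by (intro capped_parabola_ge_linear) auto
      finally show ?thesis
        using S[OF w(1)] by simp
    qed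
  qed simp
  moreover have "capped_parabola lam K (infdist z {c}) \<le> 2 * lam * K * dist z c"
    using capped_parabola_le_linear[OF \<open>lam \<ge> 0\<close>] K by simp
  moreover have "F * e\<^sup>2 \<le> F * e"
    using e F by (simp add: power2_eq_square mult_left_le mult_left_mono)
  ultimately show ?thesis
    by (simp add: algebra_simps)
qed

section \<open>Asymptotic Arzela--Ascoli theorem\<close>

text \<open>Equicontinuity only up to an error that disappears along the sequence: the functions
  \<open>U i\<close> themselves need not be continuous.\<close>
definition asymp_equicontinuous_on :: "'a::metric_space set \<Rightarrow> (nat \<Rightarrow> 'a \<Rightarrow> real) \<Rightarrow> bool" where
  "asymp_equicontinuous_on E U \<longleftrightarrow>
     (\<forall>x\<in>E. \<forall>\<eta>>0. \<exists>\<rho>>0. \<forall>\<^sub>F i in sequentially.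
        \<forall>y\<in>E. \<forall>y'\<in>E. dist x y < \<rho> \<longrightarrow> dist x y' < \<rho> \<longrightarrow> \<bar>U i y - U i y'\<bar> \<le> \<eta>)"

lemma asymp_equicontinuous_onI:
  assumes \<epsilon>: "\<epsilon> \<longlonglongrightarrow> 0"
    and modulus: "\<And>x \<eta>. x \<in> E \<Longrightarrow> 0 < \<eta> \<Longrightarrow> \<exists>\<rho>>0. \<exists>L C. \<forall>\<^sub>F i in sequentially.
       \<forall>y\<in>E. \<forall>y'\<in>E. dist x y < \<rho> \<longrightarrow> dist x y' < \<rho> \<longrightarrow>
         \<bar>U i y - U i y'\<bar> \<le> \<eta> + L * (dist x y + dist x y') + C * \<epsilon> i"
  shows "asymp_equicontinuous_on E U"
  unfolding asymp_equicontinuous_on_def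
proof (intro ballI allI impI)
  fix x and \<eta> :: real assume "x \<in> E" "0 < \<eta>"
  then obtain \<rho> L C where "0 < \<rho>" and ev: "\<forall>\<^sub>F i in sequentially.
       \<forall>y\<in>E. \<forall>y'\<in>E. dist x y < \<rho> \<longrightarrow> dist x y' < \<rho> \<longrightarrow>
         \<bar>U i y - U i y'\<bar> \<le> \<eta> / 3 + L * (dist x y + dist x y') + C * \<epsilon> i"
    using modulus[of x "\<eta> / 3"] by auto
  define \<rho>' where "\<rho>' = min \<rho> (\<eta> / (6 * (\<bar>L\<bar> + 1)))"
  have "0 < \<rho>'"
    using \<open>0 < \<rho>\<close> \<open>0 < \<eta>\<close> by (simp add: \<rho>'_def)
  have L: "L * (a + b) \<le> \<eta> / 3" if "0 \<le> a" "a < \<rho>'" "0 \<le> b" "b < \<rho>'" for a b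
  proof -
    have "L * (a + b) \<le> (\<bar>L\<bar> + 1) * (2 * \<rho>')"
      using that by (intro order_trans[OF abs_ge_self[of "L * (a + b)"]])
        (simp add: abs_mult mult_mono)
    also have "\<dots> \<le> (\<bar>L\<bar> + 1) * (2 * (\<eta> / (6 * (\<bar>L\<bar> + 1))))"
      by (intro mult_left_mono) (auto simp: \<rho>'_def)
    also have "\<dots> = \<eta> / 3"
      by (simp add: field_simps)
    finally show ?thesis .
  qed
  have "(\<lambda>i. C * \<epsilon> i) \<longlonglongrightarrow> 0"
    using tendsto_mult[OF tendsto_const \<epsilon>, of C] by simp
  then have "\<forall>\<^sub>F i in sequentially. C * \<epsilon> i < \<eta> / 3"
    using \<open>0 < \<eta>\<close> by (intro order_tendstoD(2)) auto
  with ev have "\<forall>\<^sub>F i in sequentially.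
      \<forall>y\<in>E. \<forall>y'\<in>E. dist x y < \<rho>' \<longrightarrow> dist x y' < \<rho>' \<longrightarrow> \<bar>U i y - U i y'\<bar> \<le> \<eta>"
  proof eventually_elim
    case (elim i)
    show ?case
    proof (intro ballI impI)
      fix y y' assume "y \<in> E" "y' \<in> E" "dist x y < \<rho>'" "dist x y' < \<rho>'"
      moreover from this have "dist x y < \<rho>" "dist x y' < \<rho>"
        by (auto simp: \<rho>'_def)
      ultimately have "\<bar>U i y - U i y'\<bar> \<le> \<eta> / 3 + L * (dist x y + dist x y') + C * \<epsilon> i"
        using elim(1) by blast
      moreover have "L * (dist x y + dist x y') \<le> \<eta> / 3"
        using \<open>dist x y < \<rho>'\<close> \<open>dist x y' < \<rho>'\<close> by (intro L) auto
      ultimately show "\<bar>U i y - U i y'\<bar> \<le> \<eta>"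
        using elim(2) by linarith
    qed
  qed
  with \<open>0 < \<rho>'\<close> show "\<exists>\<rho>>0. \<forall>\<^sub>F i in sequentially.
      \<forall>y\<in>E. \<forall>y'\<in>E. dist x y < \<rho> \<longrightarrow> dist x y' < \<rho> \<longrightarrow> \<bar>U i y - U i y'\<bar> \<le> \<eta>"
    by blast
qed

lemma asymp_equicontinuous_on_subseq:
  assumes equi: "asymp_equicontinuous_on E U" and r: "strict_mono r"
  shows "asymp_equicontinuous_on E (\<lambda>k. U (r k))"
  unfolding asymp_equicontinuous_on_def
proof (intro ballI allI impI)
  fix x and \<eta> :: real assume "x \<in> E" "0 < \<eta>"
  then obtain \<rho> where "0 < \<rho>" and ev: "\<forall>\<^sub>F i in sequentially.
      \<forall>y\<in>E. \<forall>y'\<in>E. dist x y < \<rho> \<longrightarrow> dist x y' < \<rho> \<longrightarrow> \<bar>U i y - U i y'\<bar> \<le> \<eta>"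
    using equi unfolding asymp_equicontinuous_on_def by blast
  with eventually_subseq[OF r ev] show "\<exists>\<rho>>0. \<forall>\<^sub>F k in sequentially.
      \<forall>y\<in>E. \<forall>y'\<in>E. dist x y < \<rho> \<longrightarrow> dist x y' < \<rho> \<longrightarrow> \<bar>U (r k) y - U (r k) y'\<bar> \<le> \<eta>"
    by blast
qed

lemma asymp_equicontinuous_on_locally_Cauchy:
  fixes W :: "nat \<Rightarrow> 'a::metric_space \<Rightarrow> real"
  assumes equi: "asymp_equicontinuous_on E W"
    and dense: "T \<subseteq> E" "E \<subseteq> closure T" and conv: "\<And>t. t \<in> T \<Longrightarrow> convergent (\<lambda>k. W k t)"
    and "x \<in> E" "0 < \<eta>"
  obtains \<rho> where "0 < \<rho>"
    "\<forall>\<^sub>F p in sequentially \<times>\<^sub>F sequentially. \<forall>y\<in>E \<inter> ball x \<rho>. dist (W (fst p) y) (W (snd p) y) < \<eta>"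
proof -
  have "0 < \<eta> / 4"
    using \<open>0 < \<eta>\<close> by simp
  then obtain \<rho> where "0 < \<rho>" and ev: "\<forall>\<^sub>F i in sequentially.
      \<forall>y\<in>E. \<forall>y'\<in>E. dist x y < \<rho> \<longrightarrow> dist x y' < \<rho> \<longrightarrow> \<bar>W i y - W i y'\<bar> \<le> \<eta> / 4"
    using equi \<open>x \<in> E\<close> unfolding asymp_equicontinuous_on_def by blast
  obtain t where "t \<in> T" "dist x t < \<rho>"
    using dense(2) \<open>x \<in> E\<close> \<open>0 < \<rho>\<close> closure_approachable by (metis dist_commute subsetD)
  then have "t \<in> E"
    using dense(1) by blast
  have "Cauchy (\<lambda>k. W k t)"
    using conv[OF \<open>t \<in> T\<close>] by (simp add: Cauchy_convergent_iff)
  then obtain M where "\<forall>m\<ge>M. \<forall>n\<ge>M. dist (W m t) (W n t) < \<eta> / 4"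
    using \<open>0 < \<eta> / 4\<close> unfolding Cauchy_def by blast
  then have "\<forall>\<^sub>F p in sequentially \<times>\<^sub>F sequentially. dist (W (fst p) t) (W (snd p) t) < \<eta> / 4"
    unfolding eventually_prod_sequentially by auto
  moreover have "\<forall>\<^sub>F p in sequentially \<times>\<^sub>F sequentially.
      (\<forall>y\<in>E. \<forall>y'\<in>E. dist x y < \<rho> \<longrightarrow> dist x y' < \<rho> \<longrightarrow> \<bar>W (fst p) y - W (fst p) y'\<bar> \<le> \<eta> / 4) \<and>
      (\<forall>y\<in>E. \<forall>y'\<in>E. dist x y < \<rho> \<longrightarrow> dist x y' < \<rho> \<longrightarrow> \<bar>W (snd p) y - W (snd p) y'\<bar> \<le> \<eta> / 4)"
    using ev ev by (rule eventually_prodI)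
  ultimately have "\<forall>\<^sub>F p in sequentially \<times>\<^sub>F sequentially.
      \<forall>y\<in>E \<inter> ball x \<rho>. dist (W (fst p) y) (W (snd p) y) < \<eta>"
  proof eventually_elim
    case (elim p)
    show ?case
    proof
      fix y assume "y \<in> E \<inter> ball x \<rho>"
      then have "\<bar>W (fst p) y - W (fst p) t\<bar> \<le> \<eta> / 4" "\<bar>W (snd p) y - W (snd p) t\<bar> \<le> \<eta> / 4"
        using elim(2) \<open>t \<in> E\<close> \<open>dist x t < \<rho>\<close> by auto
      with elim(1) show "dist (W (fst p) y) (W (snd p) y) < \<eta>"
        unfolding dist_real_def by arith
    qed
  qed
  with \<open>0 < \<rho>\<close> show ?thesis
    by (rule that)
qed

lemma asymp_equicontinuous_on_uniformly_Cauchy: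
  fixes W :: "nat \<Rightarrow> 'a::metric_space \<Rightarrow> real"
  assumes equi: "asymp_equicontinuous_on E W"
    and dense: "T \<subseteq> E" "E \<subseteq> closure T" and conv: "\<And>t. t \<in> T \<Longrightarrow> convergent (\<lambda>k. W k t)"
    and K: "compact K" "K \<subseteq> E"
  shows "uniformly_Cauchy_on K W"
proof (rule uniformly_Cauchy_onI)
  fix \<eta> :: real assume "0 < \<eta>"
  define \<U> where "\<U> = {B. open B \<and> (\<forall>\<^sub>F p in sequentially \<times>\<^sub>F sequentially.
    \<forall>y\<in>E \<inter> B. dist (W (fst p) y) (W (snd p) y) < \<eta>)}"
  have "K \<subseteq> \<Union>\<U>"
  proof
    fix x assume "x \<in> K"
    then obtain \<rho> where "0 < \<rho>" "\<forall>\<^sub>F p in sequentially \<times>\<^sub>F sequentially.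
        \<forall>y\<in>E \<inter> ball x \<rho>. dist (W (fst p) y) (W (snd p) y) < \<eta>"
      using asymp_equicontinuous_on_locally_Cauchy[OF equi dense conv _ \<open>0 < \<eta>\<close>] K(2) by blast
    then show "x \<in> \<Union>\<U>"
      unfolding \<U>_def by (intro UnionI[of "ball x \<rho>"]) auto
  qed
  then obtain \<U>' where "\<U>' \<subseteq> \<U>" "finite \<U>'" "K \<subseteq> \<Union>\<U>'"
    by (rule compactE[OF K(1)]) (auto simp: \<U>_def)
  then have "\<forall>\<^sub>F p in sequentially \<times>\<^sub>F sequentially.
      \<forall>B\<in>\<U>'. \<forall>y\<in>E \<inter> B. dist (W (fst p) y) (W (snd p) y) < \<eta>"
    by (intro eventually_ball_finite) (auto simp: \<U>_def)
  then have "\<forall>\<^sub>F p in sequentially \<times>\<^sub>F sequentially. \<forall>y\<in>K. dist (W (fst p) y) (W (snd p) y) < \<eta>"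
    by eventually_elim (use \<open>K \<subseteq> \<Union>\<U>'\<close> K(2) in blast)
  then show "\<exists>M. \<forall>y\<in>K. \<forall>m\<ge>M. \<forall>n\<ge>M. dist (W m y) (W n y) < \<eta>"
    unfolding eventually_prod_sequentially by (metis fst_conv snd_conv)
qed

lemma asymp_equicontinuous_on_limit_continuous:
  assumes equi: "asymp_equicontinuous_on E W" and lim: "\<And>x. x \<in> E \<Longrightarrow> (\<lambda>k. W k x) \<longlonglongrightarrow> v x"
  shows "continuous_on E v"
  unfolding continuous_on_iff
proof (intro ballI allI impI)
  fix x and \<eta> :: real assume "x \<in> E" "0 < \<eta>"
  then have "0 < \<eta> / 2"
    by simp
  then obtain \<rho> where "0 < \<rho>" and ev: "\<forall>\<^sub>F i in sequentially.
      \<forall>y\<in>E. \<forall>y'\<in>E. dist x y < \<rho> \<longrightarrow> dist x y' < \<rho> \<longrightarrow> \<bar>W i y - W i y'\<bar> \<le> \<eta> / 2"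
    using equi \<open>x \<in> E\<close> unfolding asymp_equicontinuous_on_def by blast
  show "\<exists>\<delta>>0. \<forall>x'\<in>E. dist x' x < \<delta> \<longrightarrow> dist (v x') (v x) < \<eta>"
  proof (intro exI[of _ \<rho>] conjI ballI impI \<open>0 < \<rho>\<close>)
    fix x' assume "x' \<in> E" "dist x' x < \<rho>"
    have "(\<lambda>k. \<bar>W k x' - W k x\<bar>) \<longlonglongrightarrow> \<bar>v x' - v x\<bar>"
      using lim \<open>x \<in> E\<close> \<open>x' \<in> E\<close> by (intro tendsto_intros)
    moreover have "\<forall>\<^sub>F k in sequentially. \<bar>W k x' - W k x\<bar> \<le> \<eta> / 2"
      using ev by eventually_elim (use \<open>x \<in> E\<close> \<open>x' \<in> E\<close> \<open>dist x' x < \<rho>\<close> \<open>0 < \<rho>\<close> in \<open>simp add: dist_commute\<close>)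
    ultimately have "\<bar>v x' - v x\<bar> \<le> \<eta> / 2"
      by (rule tendsto_upperbound) simp
    then show "dist (v x') (v x) < \<eta>"
      using \<open>0 < \<eta>\<close> by (simp add: dist_real_def)
  qed
qed

theorem asymp_Arzela_Ascoli:
  fixes U :: "nat \<Rightarrow> 'a::{metric_space, second_countable_topology} \<Rightarrow> real"
  assumes bdd: "\<forall>\<^sub>F i in sequentially. \<forall>z\<in>E. \<bar>U i z\<bar> \<le> S"
    and equi: "asymp_equicontinuous_on E U"
  obtains r v where "strict_mono r" "continuous_on E v"
    "\<And>K. compact K \<Longrightarrow> K \<subseteq> E \<Longrightarrow> uniform_limit K (\<lambda>k. U (r k)) v sequentially"
proof -
  obtain T where T: "countable T" "T \<subseteq> E" "E \<subseteq> closure T"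
    by (rule separable)
  obtain N where N: "\<And>i z. N \<le> i \<Longrightarrow> z \<in> E \<Longrightarrow> \<bar>U i z\<bar> \<le> S"
    using bdd unfolding eventually_sequentially by blast
  have "norm (U (k + N) t) \<le> S" if "t \<in> T" for k t
    using N T(2) that by auto
  then obtain r0 where r0: "strict_mono r0" "\<And>t. t \<in> T \<Longrightarrow> \<exists>l. (\<lambda>k. U (r0 k + N) t) \<longlonglongrightarrow> l"
    by (rule function_convergent_subsequence[OF T(1), of "\<lambda>k. U (k + N)" S]) auto
  define r where "r k = r0 k + N" for k
  have r: "strict_mono r"
    using r0(1) by (simp add: r_def strict_mono_def)
  define W where "W = (\<lambda>k. U (r k))"
  have equiW: "asymp_equicontinuous_on E W"
    unfolding W_def using equi r by (rule asymp_equicontinuous_on_subseq)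
  have conv: "convergent (\<lambda>k. W k t)" if "t \<in> T" for t
    using r0(2)[OF that] by (simp add: W_def r_def convergent_def)
  have Cauchy: "uniformly_Cauchy_on K W" if "compact K" "K \<subseteq> E" for K
    using asymp_equicontinuous_on_uniformly_Cauchy[OF equiW T(2,3) conv that] .
  define v where "v x = lim (\<lambda>k. W k x)" for x
  have lim: "(\<lambda>k. W k x) \<longlonglongrightarrow> v x" if "x \<in> E" for x
  proof -
    have "Cauchy (\<lambda>k. W k x)"
      using Cauchy[of "{x}"] that by (simp add: uniformly_Cauchy_imp_Cauchy)
    then show ?thesis
      unfolding v_def Cauchy_convergent_iff by (rule convergent_LIMSEQ_iff[THEN iffD1])
  qed
  show thesis
  proof (rule that[OF r])
    show "continuous_on E v"
      using equiW lim by (rule asymp_equicontinuous_on_limit_continuous)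
    fix K assume K: "compact K" "K \<subseteq> E"
    obtain l where l: "uniform_limit K W l sequentially"
      using Cauchy_uniformly_convergent[OF Cauchy[OF K]] by (auto simp: uniformly_convergent_on_def)
    have "l x = v x" if "x \<in> K" for x
      using LIMSEQ_unique[OF tendsto_uniform_limitI[OF l that] lim] K(2) that by blast
    then have "uniform_limit K W l sequentially \<longleftrightarrow> uniform_limit K W v sequentially"
      by (intro uniform_limit_cong') auto
    with l show "uniform_limit K (\<lambda>k. U (r k)) v sequentially"
      by (simp add: W_def)
  qed
qed

section \<open>Asymptotic equicontinuity of solutions\<close>

lemma eps_subsolution_pair_cone_estimate:
  fixes \<Omega> :: "'a::euclidean_space set" and v :: "'a \<Rightarrow> real"
  assumes \<Omega>: "open \<Omega>" and e: "0 < e" "e \<le> 1" and F: "0 \<le> F" "2 * F + 2 \<le> lam" and K: "1 \<le> K"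
    and sub: "eps_subsolution \<Omega> e F v" "eps_subsolution \<Omega> e F (\<lambda>y. - v y)"
    and S: "\<And>y. y \<in> closure \<Omega> \<Longrightarrow> \<bar>v y\<bar> \<le> S" and a: "\<bar>a\<bar> \<le> S" and "0 \<le> \<delta>"
    and "0 < \<rho>" and rise: "2 * S \<le> lam * K * \<rho>" "2 * S \<le> lam * K * (K - 1)"
    and near: "\<And>w. w \<in> frontier \<Omega> \<union> {c} \<Longrightarrow> dist w c < \<rho> \<Longrightarrow> \<bar>v w - a\<bar> \<le> \<delta>"
    and z: "z \<in> closure \<Omega>"
  shows "\<bar>v z - a\<bar> \<le> \<delta> + 2 * lam * K * dist z c + (4 * lam * K + F) * e"
proof -
  have S': "v y \<le> S" "- v y \<le> S" if "y \<in> closure \<Omega>" for y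
    using S[OF that] by (simp_all add: abs_le_iff)
  then have "bounded (v ` closure \<Omega>)" "bounded ((\<lambda>y. - v y) ` closure \<Omega>)"
    using S unfolding bounded_real by auto
  have near': "v w \<le> a + \<delta>" "- v w \<le> \<delta> - a" if "w \<in> frontier \<Omega> \<union> {c}" "dist w c < \<rho>" for w
    using near[OF that] by (simp_all add: abs_le_iff)
  have "S - (a + \<delta>) \<le> 2 * S" "S - (\<delta> - a) \<le> 2 * S"
    using a \<open>0 \<le> \<delta>\<close> by (simp_all add: abs_le_iff)
  have "v z \<le> (a + \<delta>) + 2 * lam * K * dist z c + (4 * lam * K + F) * e"
    by (rule eps_subsolution_cone_bound[OF \<Omega> e F K sub(1) \<open>bounded (v ` _)\<close> S'(1) \<open>0 < \<rho>\<close> _ _ near'(1) z])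
      (use rise \<open>S - (a + \<delta>) \<le> 2 * S\<close> in linarith)+
  moreover have "- v z \<le> (\<delta> - a) + 2 * lam * K * dist z c + (4 * lam * K + F) * e"
    by (rule eps_subsolution_cone_bound[OF \<Omega> e F K sub(2) \<open>bounded ((\<lambda>y. - v y) ` _)\<close> S'(2) \<open>0 < \<rho>\<close> _ _ near'(2) z])
      (use rise \<open>S - (\<delta> - a) \<le> 2 * S\<close> in linarith)+
  ultimately show ?thesis
    by (simp add: abs_le_iff)
qed

lemma cone_height_exists:
  fixes lam \<rho> S :: real
  assumes "0 < lam" "0 < \<rho>" "0 \<le> S"
  obtains K where "1 \<le> K" "2 * S \<le> lam * K * \<rho>" "2 * S \<le> lam * K * (K - 1)"
proof
  define K where "K = 1 + 2 * S / lam + 2 * S / (lam * \<rho>)"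
  have "2 * S / lam \<ge> 0" "2 * S / (lam * \<rho>) \<ge> 0"
    using assms by simp_all
  then show "1 \<le> K"
    by (simp add: K_def)
  have "2 * S = lam * (2 * S / (lam * \<rho>)) * \<rho>"
    using assms by simp
  also have "\<dots> \<le> lam * K * \<rho>"
    using assms \<open>2 * S / lam \<ge> 0\<close> by (intro mult_right_mono mult_left_mono) (auto simp: K_def)
  finally show "2 * S \<le> lam * K * \<rho>" .
  have "2 * S = lam * (2 * S / lam)"
    using assms by simp
  also have "\<dots> \<le> lam * (K - 1)"
    using assms \<open>2 * S / (lam * \<rho>) \<ge> 0\<close> by (intro mult_left_mono) (auto simp: K_def)
  also have "\<dots> \<le> lam * K * (K - 1)"
    using assms \<open>1 \<le> K\<close> by (simp add: mult_right_mono mult_le_cancel_left1)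
  finally show "2 * S \<le> lam * K * (K - 1)" .
qed

context
  fixes \<Omega> :: "'a::euclidean_space set" and F S :: real and \<epsilon> :: "nat \<Rightarrow> real" and u :: "nat \<Rightarrow> 'a \<Rightarrow> real"
  assumes \<Omega>: "open \<Omega>" and F: "0 \<le> F" and \<epsilon>_pos: "\<And>i. 0 < \<epsilon> i"
    and good: "\<forall>\<^sub>F i in sequentially. \<epsilon> i \<le> 1 \<and> eps_subsolution \<Omega> (\<epsilon> i) F (u i)
      \<and> eps_subsolution \<Omega> (\<epsilon> i) F (\<lambda>z. - u i z) \<and> (\<forall>z\<in>closure \<Omega>. \<bar>u i z\<bar> \<le> S)"
begin

lemma eps_subsolution_pairs_uniform_cone_estimate:
  assumes "0 < \<rho>" "0 \<le> \<delta>"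
  obtains L C where "0 \<le> L" "\<forall>\<^sub>F i in sequentially. \<forall>c\<in>closure \<Omega>. \<forall>a. \<bar>a\<bar> \<le> S \<longrightarrow>
      (\<forall>w\<in>frontier \<Omega> \<union> {c}. dist w c < \<rho> \<longrightarrow> \<bar>u i w - a\<bar> \<le> \<delta>) \<longrightarrow>
      (\<forall>z\<in>closure \<Omega>. \<bar>u i z - a\<bar> \<le> \<delta> + L * dist z c + C * \<epsilon> i)"
proof -
  define lam where "lam = 2 * F + 2"
  have "0 < lam" "2 * F + 2 \<le> lam"
    using F by (simp_all add: lam_def)
  obtain K where K: "1 \<le> K" "2 * max S 0 \<le> lam * K * \<rho>" "2 * max S 0 \<le> lam * K * (K - 1)"
    using cone_height_exists[OF \<open>0 < lam\<close> \<open>0 < \<rho>\<close>, of "max S 0"] by auto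
  have rise: "2 * S \<le> lam * K * \<rho>" "2 * S \<le> lam * K * (K - 1)"
    using K(2,3) max.cobounded1[of S 0] by linarith+
  show ?thesis
  proof (rule that[of "2 * lam * K" "4 * lam * K + F"])
    show "0 \<le> 2 * lam * K"
      using \<open>0 < lam\<close> K(1) by simp
    show "\<forall>\<^sub>F i in sequentially. \<forall>c\<in>closure \<Omega>. \<forall>a. \<bar>a\<bar> \<le> S \<longrightarrow>
      (\<forall>w\<in>frontier \<Omega> \<union> {c}. dist w c < \<rho> \<longrightarrow> \<bar>u i w - a\<bar> \<le> \<delta>) \<longrightarrow>
      (\<forall>z\<in>closure \<Omega>. \<bar>u i z - a\<bar> \<le> \<delta> + 2 * lam * K * dist z c + (4 * lam * K + F) * \<epsilon> i)"
      using good
    proof eventually_elim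
      case (elim i)
      show ?case
      proof (intro ballI allI impI)
        fix c a z assume "c \<in> closure \<Omega>" "\<bar>a\<bar> \<le> S"
          "\<forall>w\<in>frontier \<Omega> \<union> {c}. dist w c < \<rho> \<longrightarrow> \<bar>u i w - a\<bar> \<le> \<delta>" "z \<in> closure \<Omega>"
        with elim show "\<bar>u i z - a\<bar> \<le> \<delta> + 2 * lam * K * dist z c + (4 * lam * K + F) * \<epsilon> i"
          by (intro eps_subsolution_pair_cone_estimate[OF \<Omega> \<epsilon>_pos _ F(1) \<open>2 * F + 2 \<le> lam\<close> K(1) _ _ _ _
                \<open>0 \<le> \<delta>\<close> \<open>0 < \<rho>\<close> rise]) auto
      qed
    qed
  qed
qed

lemma eps_subsolution_pairs_interior_modulus:
  assumes "x \<in> \<Omega>" "0 \<le> \<eta>"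
  shows "\<exists>\<rho>>0. \<exists>L C. \<forall>\<^sub>F i in sequentially. \<forall>y\<in>closure \<Omega>. \<forall>y'\<in>closure \<Omega>.
           dist x y < \<rho> \<longrightarrow> dist x y' < \<rho> \<longrightarrow> \<bar>u i y - u i y'\<bar> \<le> \<eta> + L * (dist x y + dist x y') + C * \<epsilon> i"
proof -
  obtain r where "0 < r" "ball x r \<subseteq> \<Omega>"
    using \<Omega> assms(1) open_contains_ball by blast
  then have "0 < r / 2"
    by simp
  then obtain L C where "0 \<le> L" and cone: "\<forall>\<^sub>F i in sequentially. \<forall>c\<in>closure \<Omega>. \<forall>a. \<bar>a\<bar> \<le> S \<longrightarrow>
      (\<forall>w\<in>frontier \<Omega> \<union> {c}. dist w c < r / 2 \<longrightarrow> \<bar>u i w - a\<bar> \<le> 0) \<longrightarrow>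
      (\<forall>z\<in>closure \<Omega>. \<bar>u i z - a\<bar> \<le> 0 + L * dist z c + C * \<epsilon> i)"
    by (rule eps_subsolution_pairs_uniform_cone_estimate[OF _ order_refl])
  have "\<forall>\<^sub>F i in sequentially. \<forall>y\<in>closure \<Omega>. \<forall>y'\<in>closure \<Omega>.
      dist x y < r / 2 \<longrightarrow> dist x y' < r / 2 \<longrightarrow> \<bar>u i y - u i y'\<bar> \<le> \<eta> + L * (dist x y + dist x y') + C * \<epsilon> i"
    using cone good
  proof eventually_elim
    case (elim i)
    show ?case
    proof (intro ballI impI)
      fix y y' assume y: "y \<in> closure \<Omega>" "y' \<in> closure \<Omega>" "dist x y < r / 2" "dist x y' < r / 2"
      have "w \<notin> frontier \<Omega>" if "dist w y' < r / 2" for w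
      proof -
        have "dist x w < r"
          using dist_triangle[of x w y'] y(4) that by (simp add: dist_commute)
        then have "w \<in> \<Omega>"
          using \<open>ball x r \<subseteq> \<Omega>\<close> by auto
        then show ?thesis
          using \<Omega> by (simp add: frontier_def interior_open)
      qed
      then have "\<forall>w\<in>frontier \<Omega> \<union> {y'}. dist w y' < r / 2 \<longrightarrow> \<bar>u i w - u i y'\<bar> \<le> 0"
        by auto
      moreover have "\<bar>u i y'\<bar> \<le> S"
        using elim(2) y(2) by blast
      ultimately have "\<bar>u i y - u i y'\<bar> \<le> 0 + L * dist y y' + C * \<epsilon> i"
        using elim(1) y(1,2) by blast
      moreover have "L * dist y y' \<le> L * (dist x y + dist x y')"
        using \<open>0 \<le> L\<close> dist_triangle[of y y' x] by (simp add: dist_commute mult_left_mono)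
      ultimately show "\<bar>u i y - u i y'\<bar> \<le> \<eta> + L * (dist x y + dist x y') + C * \<epsilon> i"
        using \<open>0 \<le> \<eta>\<close> by linarith
    qed
  qed
  with \<open>0 < r / 2\<close> show ?thesis
    by blast
qed

lemma eps_subsolution_pairs_frontier_modulus:
  assumes g: "continuous_on (frontier \<Omega>) g" "\<And>i q. q \<in> frontier \<Omega> \<Longrightarrow> u i q = g q"
    and x: "x \<in> frontier \<Omega>" and "0 < \<eta>"
  shows "\<exists>\<rho>>0. \<exists>L C. \<forall>\<^sub>F i in sequentially. \<forall>y\<in>closure \<Omega>. \<forall>y'\<in>closure \<Omega>.
           dist x y < \<rho> \<longrightarrow> dist x y' < \<rho> \<longrightarrow> \<bar>u i y - u i y'\<bar> \<le> \<eta> + L * (dist x y + dist x y') + C * \<epsilon> i"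
proof -
  have "0 < \<eta> / 2"
    using \<open>0 < \<eta>\<close> by simp
  then obtain \<rho> where "0 < \<rho>" and g_near: "\<And>q. q \<in> frontier \<Omega> \<Longrightarrow> dist q x < \<rho> \<Longrightarrow> dist (g q) (g x) < \<eta> / 2"
    using g(1) x unfolding continuous_on_iff by blast
  obtain L C where cone: "\<forall>\<^sub>F i in sequentially. \<forall>c\<in>closure \<Omega>. \<forall>a. \<bar>a\<bar> \<le> S \<longrightarrow>
      (\<forall>w\<in>frontier \<Omega> \<union> {c}. dist w c < \<rho> \<longrightarrow> \<bar>u i w - a\<bar> \<le> \<eta> / 2) \<longrightarrow>
      (\<forall>z\<in>closure \<Omega>. \<bar>u i z - a\<bar> \<le> \<eta> / 2 + L * dist z c + C * \<epsilon> i)"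
    using \<open>0 < \<rho>\<close> \<open>0 < \<eta> / 2\<close> by (rule eps_subsolution_pairs_uniform_cone_estimate[OF _ less_imp_le])
  have "x \<in> closure \<Omega>"
    using x by (simp add: frontier_def)
  have "\<forall>\<^sub>F i in sequentially. \<forall>y\<in>closure \<Omega>. \<forall>y'\<in>closure \<Omega>.
      dist x y < \<rho> \<longrightarrow> dist x y' < \<rho> \<longrightarrow> \<bar>u i y - u i y'\<bar> \<le> \<eta> + L * (dist x y + dist x y') + (2 * C) * \<epsilon> i"
    using cone good
  proof eventually_elim
    case (elim i)
    have "\<bar>u i w - g x\<bar> \<le> \<eta> / 2" if "w \<in> frontier \<Omega> \<union> {x}" "dist w x < \<rho>" for w
    proof (cases "w = x")
      case True
      then show ?thesis
        using g(2)[OF x] \<open>0 < \<eta>\<close> by simp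
    next
      case False
      then have "w \<in> frontier \<Omega>"
        using that(1) by blast
      then show ?thesis
        using g_near[OF _ that(2)] g(2) by (fastforce simp: dist_real_def)
    qed
    moreover have "\<bar>g x\<bar> \<le> S"
      using elim(2) \<open>x \<in> closure \<Omega>\<close> g(2)[OF x] by auto
    ultimately have bound: "\<bar>u i z - g x\<bar> \<le> \<eta> / 2 + L * dist x z + C * \<epsilon> i" if "z \<in> closure \<Omega>" for z
      using elim(1) \<open>x \<in> closure \<Omega>\<close> that by (simp add: dist_commute)
    show ?case
    proof (intro ballI impI)
      fix y y' assume "y \<in> closure \<Omega>" "y' \<in> closure \<Omega>"
      then have "\<bar>u i y - g x\<bar> \<le> \<eta> / 2 + L * dist x y + C * \<epsilon> i"
        "\<bar>u i y' - g x\<bar> \<le> \<eta> / 2 + L * dist x y' + C * \<epsilon> i"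
        by (simp_all add: bound)
      then show "\<bar>u i y - u i y'\<bar> \<le> \<eta> + L * (dist x y + dist x y') + (2 * C) * \<epsilon> i"
        by (simp add: abs_le_iff algebra_simps)
    qed
  qed
  with \<open>0 < \<rho>\<close> show ?thesis
    by blast
qed

lemma eps_subsolution_pairs_asymp_equicontinuous:
  assumes "\<epsilon> \<longlonglongrightarrow> 0" "continuous_on (frontier \<Omega>) g" "\<And>i q. q \<in> frontier \<Omega> \<Longrightarrow> u i q = g q"
  shows "asymp_equicontinuous_on (closure \<Omega>) u"
proof (rule asymp_equicontinuous_onI[OF assms(1)])
  fix x and \<eta> :: real assume "x \<in> closure \<Omega>" "0 < \<eta>"
  show "\<exists>\<rho>>0. \<exists>L C. \<forall>\<^sub>F i in sequentially. \<forall>y\<in>closure \<Omega>. \<forall>y'\<in>closure \<Omega>.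
          dist x y < \<rho> \<longrightarrow> dist x y' < \<rho> \<longrightarrow> \<bar>u i y - u i y'\<bar> \<le> \<eta> + L * (dist x y + dist x y') + C * \<epsilon> i"
  proof (cases "x \<in> \<Omega>")
    case True
    then show ?thesis
      using \<open>0 < \<eta>\<close> by (intro eps_subsolution_pairs_interior_modulus) auto
  next
    case False
    then have "x \<in> frontier \<Omega>"
      using \<open>x \<in> closure \<Omega>\<close> \<Omega> by (simp add: frontier_def interior_open)
    then show ?thesis
      using assms(2,3) \<open>0 < \<eta>\<close> by (intro eps_subsolution_pairs_frontier_modulus)
  qed
qed

end

lemma eps_subsolution_pair_abs_le_frontier_bound:
  fixes \<Omega> :: "'a::euclidean_space set" and v :: "'a \<Rightarrow> real"
  assumes \<Omega>: "open \<Omega>" and e: "0 < e" "e \<le> 1" and F: "0 \<le> F"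
    and sub: "eps_subsolution \<Omega> e F v" "eps_subsolution \<Omega> e F (\<lambda>y. - v y)"
    and v_bdd: "bounded (v ` closure \<Omega>)"
    and fr: "frontier \<Omega> \<noteq> {}" and W: "0 \<le> W" "\<And>y. y \<in> \<Omega> \<Longrightarrow> infdist y (frontier \<Omega>) \<le> W"
    and G: "\<And>q. q \<in> frontier \<Omega> \<Longrightarrow> \<bar>v q\<bar> \<le> G" and z: "z \<in> closure \<Omega>"
  shows "\<bar>v z\<bar> \<le> G + (2 * F + 2) * (W + 2)\<^sup>2 + 4 * (2 * F + 2) * (W + 2) + F"
proof -
  have "bounded ((\<lambda>y. - v y) ` closure \<Omega>)"
    using v_bdd by (simp add: bounded_real)
  moreover have "v q \<le> G" "- v q \<le> G" if "q \<in> frontier \<Omega>" for q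
    using G[OF that] by (simp_all add: abs_le_iff)
  ultimately have "v z \<le> G + (2 * F + 2) * (W + 2)\<^sup>2 + 4 * (2 * F + 2) * (W + 2) + F"
    "- v z \<le> G + (2 * F + 2) * (W + 2)\<^sup>2 + 4 * (2 * F + 2) * (W + 2) + F"
    using eps_subsolution_le_frontier_bound[OF \<Omega> e F sub(1) v_bdd fr W _ z]
      eps_subsolution_le_frontier_bound[OF \<Omega> e F sub(2) _ fr W _ z] by blast+
  then show ?thesis
    by (simp add: abs_le_iff)
qed

lemma frontier_nonempty_if_width_finite:
  assumes "\<Omega> \<noteq> {}" "width \<Omega> < \<infinity>"
  shows "frontier \<Omega> \<noteq> {}"
proof
  assume "frontier \<Omega> = {}"
  then have "width \<Omega> = \<infinity>"
    using assms(1) by (simp add: width_def top_ereal_def)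
  with assms(2) show False
    by simp
qed

lemma infdist_frontier_le_width:
  assumes "y \<in> \<Omega>"
  shows "ereal (infdist y (frontier \<Omega>)) \<le> width \<Omega>"
proof -
  have "ereal (infdist y (frontier \<Omega>)) \<le> (INF q\<in>frontier \<Omega>. intr_dist \<Omega> q y)"
  proof (rule INF_greatest)
    fix q assume "q \<in> frontier \<Omega>"
    then have "ereal (infdist y (frontier \<Omega>)) \<le> ereal (dist q y)"
      using infdist_le[of q "frontier \<Omega>" y] by (simp add: dist_commute)
    then show "ereal (infdist y (frontier \<Omega>)) \<le> intr_dist \<Omega> q y"
      using dist_le_intr_dist by (rule order_trans)
  qed
  also have "\<dots> \<le> width \<Omega>"
    unfolding width_def using assms by (rule SUP_upper)
  finally show ?thesis .
qed

lemma eps_subsolution_pair_bounded_if_width_finite: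
  fixes \<Omega> :: "'a::euclidean_space set" and g :: "'a \<Rightarrow> real"
  assumes \<Omega>: "open \<Omega>" "\<Omega> \<noteq> {}" "width \<Omega> < \<infinity>" and F: "0 \<le> F" and g: "bounded (g ` frontier \<Omega>)"
  obtains S where "\<And>e v z. 0 < e \<Longrightarrow> e \<le> 1 \<Longrightarrow> eps_subsolution \<Omega> e F v \<Longrightarrow>
    eps_subsolution \<Omega> e F (\<lambda>y. - v y) \<Longrightarrow> bounded (v ` closure \<Omega>) \<Longrightarrow>
    (\<And>q. q \<in> frontier \<Omega> \<Longrightarrow> v q = g q) \<Longrightarrow> z \<in> closure \<Omega> \<Longrightarrow> \<bar>v z\<bar> \<le> S"
proof -
  obtain W :: nat where "width \<Omega> < ereal W"
    using \<Omega>(3) less_PInf_Ex_of_nat by auto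
  then have W: "infdist y (frontier \<Omega>) \<le> W" if "y \<in> \<Omega>" for y
    using infdist_frontier_le_width[OF that] by (metis ereal_less_eq(3) less_imp_le order_le_less_trans)
  obtain G where G: "\<And>q. q \<in> frontier \<Omega> \<Longrightarrow> \<bar>g q\<bar> \<le> G"
    using g by (auto simp: bounded_real)
  show ?thesis
  proof (rule that)
    fix e v z assume "0 < e" "e \<le> 1" "eps_subsolution \<Omega> e F v" "eps_subsolution \<Omega> e F (\<lambda>y. - v y)"
      "bounded (v ` closure \<Omega>)" "\<And>q. q \<in> frontier \<Omega> \<Longrightarrow> v q = g q" "z \<in> closure \<Omega>"
    with G show "\<bar>v z\<bar> \<le> G + (2 * F + 2) * (real W + 2)\<^sup>2 + 4 * (2 * F + 2) * (real W + 2) + F"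
      by (intro eps_subsolution_pair_abs_le_frontier_bound[OF \<Omega>(1) _ _ F _ _ _
            frontier_nonempty_if_width_finite[OF \<Omega>(2,3)] _ W]) auto
  qed
qed

theorem theorem1p3:
  fixes \<Omega> :: "(real ^ 'n) set"
    and f :: "real ^ 'n \<Rightarrow> real"
    and g :: "real ^ 'n \<Rightarrow> real"
    and \<epsilon> :: "nat \<Rightarrow> real"
    and u :: "nat \<Rightarrow> real ^ 'n \<Rightarrow> real"
  assumes dom: "open \<Omega>" "connected \<Omega>" "\<Omega> \<noteq> {}"
    and wid: "width \<Omega> < \<infinity>"
    and f_meas: "f \<in> borel_measurable (lebesgue_on \<Omega>)"
    and f_ess_bdd: "\<exists>M. AE x in lebesgue_on \<Omega>. \<bar>f x\<bar> \<le> M"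
    and g_cont: "continuous_on (frontier \<Omega>) g"
    and g_bdd: "bounded (g ` frontier \<Omega>)"
    and eps_pos: "\<And>i. \<epsilon> i > 0"
    and eps_lim: "\<epsilon> \<longlonglongrightarrow> 0"
    and u_bdd: "\<And>i. bounded (u i ` closure \<Omega>)"
    and u_eq: "\<And>i x. x \<in> \<Omega> \<Longrightarrow> eps_inf_lap \<Omega> (\<epsilon> i) (u i) x = (\<epsilon> i)\<^sup>2 * f x"
    and u_bd: "\<And>i x. x \<in> frontier \<Omega> \<Longrightarrow> u i x = g x"
  shows "\<exists>r v. strict_mono r \<and> continuous_on (closure \<Omega>) v \<and>
           (\<forall>K. compact K \<and> K \<subseteq> closure \<Omega> \<longrightarrow>
                 uniform_limit K (\<lambda>k. u (r k)) v sequentially)"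
proof -
  txt \<open>The equation for \<open>u 0\<close> already bounds \<open>f\<close> pointwise on \<open>\<Omega>\<close>.\<close>
  obtain F where F: "0 \<le> F" "\<And>x. x \<in> \<Omega> \<Longrightarrow> \<bar>f x\<bar> \<le> F"
    using eps_inf_lap_rhs_bounded[OF eps_pos u_bdd u_eq] by blast
  note sub = eps_inf_lap_solution_is_subsolution[OF u_bdd u_eq F(2)]
  obtain S where S: "\<And>e v z. 0 < e \<Longrightarrow> e \<le> 1 \<Longrightarrow> eps_subsolution \<Omega> e F v \<Longrightarrow>
    eps_subsolution \<Omega> e F (\<lambda>y. - v y) \<Longrightarrow> bounded (v ` closure \<Omega>) \<Longrightarrow>
    (\<And>q. q \<in> frontier \<Omega> \<Longrightarrow> v q = g q) \<Longrightarrow> z \<in> closure \<Omega> \<Longrightarrow> \<bar>v z\<bar> \<le> S"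
    by (rule eps_subsolution_pair_bounded_if_width_finite[OF dom(1,3) wid F(1) g_bdd]) blast
  have "\<forall>\<^sub>F i in sequentially. \<epsilon> i < 1"
    using eps_lim by (rule order_tendstoD) simp
  then have good: "\<forall>\<^sub>F i in sequentially. \<epsilon> i \<le> 1 \<and> eps_subsolution \<Omega> (\<epsilon> i) F (u i)
      \<and> eps_subsolution \<Omega> (\<epsilon> i) F (\<lambda>z. - u i z) \<and> (\<forall>z\<in>closure \<Omega>. \<bar>u i z\<bar> \<le> S)"
    by eventually_elim (use S[OF eps_pos _ sub u_bdd u_bd] in \<open>simp add: sub\<close>)
  then have "\<forall>\<^sub>F i in sequentially. \<forall>z\<in>closure \<Omega>. \<bar>u i z\<bar> \<le> S"
    by (rule eventually_mono) blast
  moreover have "asymp_equicontinuous_on (closure \<Omega>) u"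
    using dom(1) F(1) eps_pos good eps_lim g_cont u_bd by (rule eps_subsolution_pairs_asymp_equicontinuous)
  ultimately show ?thesis
    by (rule asymp_Arzela_Ascoli) blast
qed

end
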